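(* Let $m_1,m_2\in\mathbb{N}$ be relatively prime, let $\alpha\in\mathbb{R}$, and let $\boldsymbol{\varrho}=\boldsymbol{\varrho}^{(\boldsymbol{m})}_\alpha$ be the rhodonea curve defined below. For $t\in[0,2\pi)$ put $\mathcal{S}(t)=\{s\in[0,2\pi):\ \boldsymbol{\varrho}(s)=\boldsymbol{\varrho}(t)\}$, and let $t_l=\frac{l\pi}{2m_1m_2}$ for $l\in\{0,1,\dots,4m_1m_2-1\}$. If $m_1+m_2$ is odd, then the minimal period of $\boldsymbol{\varrho}$ is $2\pi$ and: (i) $\#\mathcal{S}(t)=2m_2$ if $t=t_l$ for some $l\in\{0,\dots,4m_1m_2-1\}$ with $l\equiv m_1 \pmod{2m_1}$; (ii) $\#\mathcal{S}(t)=2$ if $t=t_l$ for some $l\in\{0,\dots,4m_1m_2-1\}$ with $l\not\equiv 0\pmod{m_1}$; (iii) $\#\mathcal{S}(t)=1$ for all other $t\in[0,2\pi)$. If $m_1+m_2$ is even, then the minimal period of $\boldsymbol{\varrho}$ is $\pi$ and: (i)' $\#\mathcal{S}(t)=2m_2$ if $t=t_l$ for some $l\in\{0,\dots,4m_1m_2-1\}$ with $l\equiv m_1\pmod{2m_1}$; (ii)' $\#\mathcal{S}(t)=4$ if $t=t_{2l}$ for some $l\in\{0,\dots,2m_1m_2-1\}$ with $l\not\equiv 0\pmod{m_1}$; (iii)' $\#\mathcal{S}(t)=2$ for all other $t\in[0,2\pi)$.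
   Context: For $\boldsymbol{m}=(m_1,m_2)\in\mathbb{N}^2$ and $\alpha\in\mathbb{R}$, the rhodonea curve is $\boldsymbol{\varrho}^{(\boldsymbol{m})}_\alpha:\mathbb{R}\to\mathbb{R}^2$, $\boldsymbol{\varrho}^{(\boldsymbol{m})}_\alpha(t)=\big(\cos(m_2t)\cos(m_1t-\alpha\pi),\ \cos(m_2t)\sin(m_1t-\alpha\pi)\big)$. It takes values in the closed unit disk $\mathbb{D}=\{x\in\mathbb{R}^2:|x|\le1\}$. *)

theory Defs
  imports "HOL-Analysis.Analysis"
begin

definition rhodonea :: "nat \<Rightarrow> nat \<Rightarrow> real \<Rightarrow> real \<Rightarrow> real \<times> real" where
  "rhodonea m1 m2 \<alpha> t =
     (cos (real m2 * t) * cos (real m1 * t - \<alpha> * pi),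
      cos (real m2 * t) * sin (real m1 * t - \<alpha> * pi))"

definition minimal_period :: "(real \<Rightarrow> 'a) \<Rightarrow> real \<Rightarrow> bool" where
  "minimal_period f p \<longleftrightarrow> p > 0 \<and> (\<forall>t. f (t + p) = f t) \<and>
     (\<forall>q. 0 < q \<and> q < p \<longrightarrow> \<not> (\<forall>t. f (t + q) = f t))"

definition self_inter_set :: "(real \<Rightarrow> 'a) \<Rightarrow> real \<Rightarrow> real set" where
  "self_inter_set f t = {s \<in> {0..<2*pi}. f s = f t}"

definition tnode :: "nat \<Rightarrow> nat \<Rightarrow> nat \<Rightarrow> real" where
  "tnode m1 m2 l = real l * pi / (2 * real m1 * real m2)"

end

theory Submission
  imports Defs "HOL-Number_Theory.Cong"
begin

text \<open>
  Write \<open>\<rho>(t) = c(t) (cos \<theta>(t), sin \<theta>(t))\<close> with \<open>c(t) = cos (m\<^sub>2 t)\<close> and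
  \<open>\<theta>(t) = m\<^sub>1 t - \<alpha>\<pi>\<close>.
  Away from the origin, \<open>\<rho>(s) = \<rho>(t)\<close> forces \<open>\<theta>(s) = \<theta>(t) + k\<pi>\<close> and \<open>c(s) = (-1)\<^sup>k c(t)\<close>,
  so \<open>S(t)\<close> is in bijection with the \<open>k < 2m\<^sub>1\<close> satisfying
  \<open>cos (m\<^sub>2 (t + k\<pi>/m\<^sub>1)) = (-1)\<^sup>k cos (m\<^sub>2 t)\<close>. By the sum-to-product formula this holds
  iff \<open>2m\<^sub>1\<close> divides \<open>k(m\<^sub>1 - m\<^sub>2)\<close> (a condition independent of \<open>t\<close>) or \<open>t = t\<^sub>l\<close> is a node
  with \<open>2m\<^sub>1\<close> dividing \<open>l + k(m\<^sub>1 + m\<^sub>2)\<close>. Both are linear congruences in \<open>k\<close>; coprimality of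
  \<open>m\<^sub>1, m\<^sub>2\<close> makes their solutions easy to count, with the parity of \<open>m\<^sub>1 + m\<^sub>2\<close> deciding
  between one and two solutions of each kind. The origin is reached exactly at the \<open>2m\<^sub>2\<close>
  zeros of \<open>c\<close>. Finally, the minimal period is read off from \<open>#S(0)\<close>: a smaller period
  would put too many parameters into \<open>S(0)\<close>.
\<close>

lemma cos_add_mult_pi: "cos (x + real n * pi) = (-1)^n * cos x"
  by (simp add: cos_add)

lemma sin_add_mult_pi: "sin (x + real n * pi) = (-1)^n * sin x"
  by (simp add: sin_add)

lemma cos_nat_mult_diff_2pi: "cos (real m * (x - 2 * pi)) = cos (real m * x)"
proof -
  have "real m * x = real m * (x - 2 * pi) + real (2 * m) * pi"
    by (simp add: algebra_simps)
  then show ?thesis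
    by (simp only: cos_add_mult_pi) simp
qed

lemma rhodonea_add_mult_pi:
  "rhodonea m1 m2 \<alpha> (t + real n * pi) =
     (if even (n * (m1 + m2)) then rhodonea m1 m2 \<alpha> t else - rhodonea m1 m2 \<alpha> t)"
proof -
  have "real m2 * (t + real n * pi) = real m2 * t + real (m2 * n) * pi"
    by (simp add: algebra_simps)
  then have c: "cos (real m2 * (t + real n * pi)) = (-1)^(m2 * n) * cos (real m2 * t)"
    by (simp only: cos_add_mult_pi)
  have "real m1 * (t + real n * pi) - \<alpha> * pi = (real m1 * t - \<alpha> * pi) + real (m1 * n) * pi"
    by (simp add: algebra_simps)
  then have "cos (real m1 * (t + real n * pi) - \<alpha> * pi) = (-1)^(m1 * n) * cos (real m1 * t - \<alpha> * pi)"
    and "sin (real m1 * (t + real n * pi) - \<alpha> * pi) = (-1)^(m1 * n) * sin (real m1 * t - \<alpha> * pi)"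
    by (simp_all only: cos_add_mult_pi sin_add_mult_pi)
  moreover have "(-1::real)^(m2 * n) * (-1)^(m1 * n) = (if even (n * (m1 + m2)) then 1 else -1)"
    by (simp add: algebra_simps flip: power_add)
  ultimately show ?thesis
    unfolding rhodonea_def c by auto
qed

lemma rhodonea_add_2pi: "rhodonea m1 m2 \<alpha> (t + 2 * pi) = rhodonea m1 m2 \<alpha> t"
  using rhodonea_add_mult_pi[of m1 m2 \<alpha> t 2] by simp

lemma rhodonea_add_pi:
  assumes "even (m1 + m2)"
  shows "rhodonea m1 m2 \<alpha> (t + pi) = rhodonea m1 m2 \<alpha> t"
  using rhodonea_add_mult_pi[of m1 m2 \<alpha> t 1] assms by simp

lemma rhodonea_eq_origin_iff: "rhodonea m1 m2 \<alpha> s = (0, 0) \<longleftrightarrow> cos (real m2 * s) = 0"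
proof -
  have "\<not> (cos \<theta> = 0 \<and> sin \<theta> = 0)" for \<theta> :: real
  proof
    assume "cos \<theta> = 0 \<and> sin \<theta> = 0"
    then show False
      using sin_cos_squared_add[of \<theta>] by simp
  qed
  then show ?thesis
    by (auto simp: rhodonea_def)
qed

lemma polar_eq_polarE:
  fixes a b \<phi> \<psi> :: real
  assumes "b \<noteq> 0" "a * cos \<phi> = b * cos \<psi>" "a * sin \<phi> = b * sin \<psi>"
  obtains k :: int where "\<phi> = \<psi> + of_int k * pi" "a = (if even k then b else - b)"
proof -
  have "a\<^sup>2 = (a * cos \<phi>)\<^sup>2 + (a * sin \<phi>)\<^sup>2"
    by (simp add: power_mult_distrib flip: distrib_left)
  also have "\<dots> = b\<^sup>2"
    unfolding assms(2,3) by (simp add: power_mult_distrib flip: distrib_left)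
  finally consider "a = b" | "a = - b"
    by (auto simp: power2_eq_iff)
  then show ?thesis
  proof cases
    case 1
    then have "sin \<phi> = sin \<psi> \<and> cos \<phi> = cos \<psi>"
      using assms by auto
    then obtain n :: int where "\<phi> = \<psi> + 2 * pi * n"
      using sin_cos_eq_iff by blast
    then show ?thesis
      using 1 by (intro that[of "2 * n"]) (auto simp: algebra_simps)
  next
    case 2
    then have "b * (cos \<phi> + cos \<psi>) = 0" "b * (sin \<phi> + sin \<psi>) = 0"
      using assms(2,3) by (simp_all add: algebra_simps)
    then have "sin \<phi> = sin (\<psi> + pi) \<and> cos \<phi> = cos (\<psi> + pi)"
      using assms(1) by (auto simp: add_eq_0_iff)
    then obtain n :: int where "\<phi> = \<psi> + pi + 2 * pi * n"
      using sin_cos_eq_iff by blast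
    then show ?thesis
      using 2 by (intro that[of "2 * n + 1"]) (auto simp: algebra_simps)
  qed
qed

lemma rhodonea_eqE:
  assumes "cos (real m2 * t) \<noteq> 0" "rhodonea m1 m2 \<alpha> s = rhodonea m1 m2 \<alpha> t"
  obtains k :: int where "real m1 * (s - t) = of_int k * pi"
    "cos (real m2 * s) = (if even k then cos (real m2 * t) else - cos (real m2 * t))"
proof -
  from assms(2) have
    "cos (real m2 * s) * cos (real m1 * s - \<alpha> * pi) = cos (real m2 * t) * cos (real m1 * t - \<alpha> * pi)"
    "cos (real m2 * s) * sin (real m1 * s - \<alpha> * pi) = cos (real m2 * t) * sin (real m1 * t - \<alpha> * pi)"
    by (simp_all add: rhodonea_def)
  from polar_eq_polarE[OF assms(1) this] obtain k :: int
    where "real m1 * s - \<alpha> * pi = real m1 * t - \<alpha> * pi + of_int k * pi"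
      "cos (real m2 * s) = (if even k then cos (real m2 * t) else - cos (real m2 * t))" .
  then show ?thesis
    by (intro that[of k]) (auto simp: algebra_simps)
qed

lemma rhodonea_shift:
  assumes "m1 \<ge> 1"
    and "cos (real m2 * (t + real k * pi / real m1)) = (-1)^k * cos (real m2 * t)"
  shows "rhodonea m1 m2 \<alpha> (t + real k * pi / real m1) = rhodonea m1 m2 \<alpha> t"
proof -
  have shift: "real m1 * (t + real k * pi / real m1) - \<alpha> * pi = (real m1 * t - \<alpha> * pi) + real k * pi"
    using assms(1) by (simp add: field_simps)
  have "(-1::real)^k * (-1)^k = 1"
    by (simp flip: power_add)
  then show ?thesis
    unfolding rhodonea_def shift assms(2) cos_add_mult_pi sin_add_mult_pi by (simp add: algebra_simps)
qed

lemma minimal_period_of_card_self_inter_set: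
  fixes f :: "real \<Rightarrow> 'a" and N :: nat
  assumes "N > 0" "\<And>t. f (t + 2 * pi / N) = f t" "card (self_inter_set f 0) = N"
  shows "minimal_period f (2 * pi / N)"
proof -
  define p where "p = 2 * pi / N"
  have p: "p > 0" "real N * p = 2 * pi" "\<And>t. f (t + p) = f t"
    using assms(1,2) by (simp_all add: p_def)
  have "1 * p \<le> real N * p"
    using assms(1) p(1) by (intro mult_right_mono) auto
  then have p_le: "p \<le> 2 * pi"
    using p(2) by simp
  have f_mult: "f (real i * p) = f 0" for i
  proof (induction i)
    case (Suc i)
    have "real (Suc i) * p = real i * p + p"
      by (simp add: algebra_simps)
    then show ?case
      using p(3) Suc by simp
  qed simp
  have multiples: "(\<lambda>i. real i * p) ` {..<N} \<subseteq> self_inter_set f 0"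
  proof
    fix s assume "s \<in> (\<lambda>i. real i * p) ` {..<N}"
    then obtain i where "i < N" "s = real i * p" by auto
    moreover from \<open>i < N\<close> have "real i * p < real N * p"
      using p(1) by (intro mult_strict_right_mono) auto
    ultimately show "s \<in> self_inter_set f 0"
      using p(1,2) f_mult by (simp add: self_inter_set_def)
  qed
  txt \<open>A period \<open>q < p\<close> would add \<open>q\<close> to the \<open>N\<close> distinct points \<open>i p\<close> already in \<open>S(0)\<close>.\<close>
  have "\<not> (\<forall>t. f (t + q) = f t)" if q: "0 < q" "q < p" for q
  proof
    assume "\<forall>t. f (t + q) = f t"
    then have "f q = f 0"
      by (metis add_0)
    then have sub: "insert q ((\<lambda>i. real i * p) ` {..<N}) \<subseteq> self_inter_set f 0"
      using q p_le multiples by (auto simp: self_inter_set_def)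
    moreover have "q \<notin> (\<lambda>i. real i * p) ` {..<N}"
    proof
      assume "q \<in> (\<lambda>i. real i * p) ` {..<N}"
      then obtain i where "q = real i * p" by auto
      moreover have "real i * p = 0 \<or> 1 * p \<le> real i * p"
        using p(1) by (cases "i = 0") (auto intro!: mult_right_mono)
      ultimately show False
        using q by (elim disjE) linarith+
    qed
    moreover have "card ((\<lambda>i. real i * p) ` {..<N}) = N"
      using p(1) by (subst card_image) (auto intro: inj_onI)
    ultimately have "card (insert q ((\<lambda>i. real i * p) ` {..<N})) = Suc N"
      by simp
    moreover have "finite (self_inter_set f 0)"
      using assms(1,3) card_ge_0_finite by force
    ultimately have "Suc N \<le> card (self_inter_set f 0)"
      using card_mono[OF _ sub] by simp
    then show False
      using assms(3) by simp
  qed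
  then show ?thesis
    unfolding minimal_period_def p_def[symmetric] using p by blast
qed

text \<open>The parameter \<open>t + k\<pi>/m\<^sub>1\<close> reduced into \<open>[0, 2\<pi>)\<close>; one reduction suffices when
  \<open>t \<in> [0, 2\<pi>)\<close> and \<open>k < 2m\<^sub>1\<close>.\<close>

definition shift_param :: "nat \<Rightarrow> real \<Rightarrow> nat \<Rightarrow> real" where
  "shift_param m1 t k =
     (if t + real k * pi / real m1 < 2 * pi then t + real k * pi / real m1
      else t + real k * pi / real m1 - 2 * pi)"

definition shift_indices :: "nat \<Rightarrow> nat \<Rightarrow> real \<Rightarrow> nat set" where
  "shift_indices m1 m2 t =
     {k. k < 2 * m1 \<and> cos (real m2 * (t + real k * pi / real m1)) = (-1)^k * cos (real m2 * t)}"

lemma shift_param_inj: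
  assumes "m1 \<ge> 1"
  shows "inj_on (shift_param m1 t) {..<2 * m1}"
proof (rule inj_onI)
  fix a b assume a: "a \<in> {..<2 * m1}" and b: "b \<in> {..<2 * m1}"
    and eq: "shift_param m1 t a = shift_param m1 t b"
  define d where "d = (real a - real b) * pi / real m1"
  have "d \<in> {0, 2 * pi, - 2 * pi}"
    using eq by (auto simp: shift_param_def d_def diff_divide_distrib left_diff_distrib split: if_splits)
  moreover have "\<bar>d\<bar> = \<bar>real a - real b\<bar> * pi / real m1"
    by (simp add: d_def abs_mult)
  moreover have "\<bar>real a - real b\<bar> * pi < 2 * real m1 * pi"
    using a b by simp
  then have "\<bar>real a - real b\<bar> * pi / real m1 < 2 * pi"
    using assms by (simp add: field_simps)
  ultimately have "d = 0"
    by auto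
  then show "a = b"
    using assms by (simp add: d_def)
qed

lemma shift_param_range:
  assumes "m1 \<ge> 1" "t \<in> {0..<2 * pi}" "k < 2 * m1"
  shows "shift_param m1 t k \<in> {0..<2 * pi}"
proof -
  have "real k * pi / real m1 < 2 * pi"
    using assms by (simp add: field_simps)
  then show ?thesis
    using assms(2) by (auto simp: shift_param_def)
qed

lemma shift_param_eq_mod:
  assumes "m1 \<ge> 1" "s \<in> {0..<2 * pi}" "t \<in> {0..<2 * pi}" "real m1 * (s - t) = of_int k * pi"
  shows "s = shift_param m1 t (nat (k mod (2 * int m1)))"
proof -
  define r where "r = nat (k mod (2 * int m1))"
  define q where "q = k div (2 * int m1)"
  have k: "k = int r + 2 * int m1 * q"
    using assms(1) by (simp add: r_def q_def)
  have "r < 2 * m1"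
    using assms(1) by (simp add: r_def nat_less_iff)
  then have r_pi: "real r * pi / real m1 < 2 * pi"
    using assms(1) by (simp add: field_simps)
  define u where "u = t + real r * pi / real m1"
  have s: "s = u + of_int q * (2 * pi)"
    using assms(1,4) unfolding u_def k by (simp add: field_simps)
  have "0 \<le> u" "u < 4 * pi"
    using assms(3) r_pi by (auto simp: u_def)
  moreover have "0 \<le> s" "s < 2 * pi"
    using assms(2) by auto
  ultimately have "of_int q * pi > (- 2) * pi" "of_int q * pi < 1 * pi"
    using s by linarith+
  then have "of_int q > (- 2 :: real)" "of_int q < (1 :: real)"
    using mult_less_cancel_right_pos pi_gt_zero by blast+
  then have "q = 0 \<or> q = -1"
    by linarith
  moreover have "shift_param m1 t r = (if u < 2 * pi then u else u - 2 * pi)"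
    by (simp add: shift_param_def u_def)
  ultimately show ?thesis
    using s assms(2) unfolding r_def[symmetric] by auto
qed

lemma self_inter_set_rhodonea:
  assumes "m1 \<ge> 1" "t \<in> {0..<2 * pi}" "cos (real m2 * t) \<noteq> 0"
  shows "self_inter_set (rhodonea m1 m2 \<alpha>) t = shift_param m1 t ` shift_indices m1 m2 t"
proof (intro antisym subsetI)
  fix s assume "s \<in> shift_param m1 t ` shift_indices m1 m2 t"
  then obtain k where k: "k < 2 * m1" "s = shift_param m1 t k"
    "cos (real m2 * (t + real k * pi / real m1)) = (-1)^k * cos (real m2 * t)"
    by (auto simp: shift_indices_def)
  have "rhodonea m1 m2 \<alpha> s = rhodonea m1 m2 \<alpha> t"
    using rhodonea_shift[OF assms(1) k(3)] rhodonea_add_2pi[of m1 m2 \<alpha> "s"]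
    by (auto simp: k(2) shift_param_def)
  then show "s \<in> self_inter_set (rhodonea m1 m2 \<alpha>) t"
    using shift_param_range[OF assms(1,2) k(1)] by (simp add: k(2) self_inter_set_def)
next
  fix s assume "s \<in> self_inter_set (rhodonea m1 m2 \<alpha>) t"
  then have s: "s \<in> {0..<2 * pi}" "rhodonea m1 m2 \<alpha> s = rhodonea m1 m2 \<alpha> t"
    by (auto simp: self_inter_set_def)
  obtain k :: int where k: "real m1 * (s - t) = of_int k * pi"
    "cos (real m2 * s) = (if even k then cos (real m2 * t) else - cos (real m2 * t))"
    using rhodonea_eqE[OF assms(3) s(2)] .
  define r where "r = nat (k mod (2 * int m1))"
  have "k = int r + 2 * int m1 * (k div (2 * int m1))"
    using assms(1) by (simp add: r_def)
  then have r: "r < 2 * m1" "even k \<longleftrightarrow> even r"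
    using assms(1) by (simp add: r_def nat_less_iff, metis dvd_triv_left even_add even_of_nat mult.assoc)
  have s_eq: "s = shift_param m1 t r"
    unfolding r_def by (rule shift_param_eq_mod[OF assms(1) s(1) assms(2) k(1)])
  have "cos (real m2 * (t + real r * pi / real m1)) = cos (real m2 * s)"
    using cos_nat_mult_diff_2pi[of m2 "t + real r * pi / real m1"] by (simp add: s_eq shift_param_def)
  then have "r \<in> shift_indices m1 m2 t"
    using k(2) r by (simp add: shift_indices_def)
  with s_eq show "s \<in> shift_param m1 t ` shift_indices m1 m2 t"
    by blast
qed

lemma card_self_inter_set_rhodonea:
  assumes "m1 \<ge> 1" "t \<in> {0..<2 * pi}" "cos (real m2 * t) \<noteq> 0"
  shows "card (self_inter_set (rhodonea m1 m2 \<alpha>) t) = card (shift_indices m1 m2 t)"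
proof -
  have "inj_on (shift_param m1 t) (shift_indices m1 m2 t)"
    using shift_param_inj[OF assms(1)] by (rule inj_on_subset) (auto simp: shift_indices_def)
  then show ?thesis
    unfolding self_inter_set_rhodonea[OF assms] by (rule card_image)
qed

text \<open>The two ways a shift index can arise (see \<open>mem_shift_indices_iff\<close>): for every \<open>t\<close>, or
  only at the node \<open>t\<^sub>l\<close>.\<close>

definition global_shifts :: "nat \<Rightarrow> nat \<Rightarrow> nat set" where
  "global_shifts m1 m2 = {k. k < 2 * m1 \<and> 2 * int m1 dvd int k * (int m1 - int m2)}"

definition node_shifts :: "nat \<Rightarrow> nat \<Rightarrow> nat \<Rightarrow> nat set" where
  "node_shifts m1 m2 l = {k. k < 2 * m1 \<and> 2 * int m1 dvd int l + int k * (int m1 + int m2)}"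

lemma mem_shift_indices_iff:
  assumes "m1 \<ge> 1"
  shows "k \<in> shift_indices m1 m2 t \<longleftrightarrow> k \<in> global_shifts m1 m2 \<or> k < 2 * m1 \<and>
    (\<exists>i::int. 2 * real m1 * real m2 * t + real k * (real m1 + real m2) * pi = 2 * of_int i * real m1 * pi)"
proof -
  have m: "real m1 > 0"
    using assms by simp
  define x where "x = real m2 * (t + real k * pi / real m1)"
  define y where "y = real m2 * t + real k * pi"
  have y: "(-1)^k * cos (real m2 * t) = cos y"
    by (simp add: y_def cos_add_mult_pi)
  have sum: "(x + y) / 2 = (2 * real m1 * real m2 * t + real k * (real m1 + real m2) * pi) / (2 * real m1)"
    using m by (simp add: x_def y_def field_simps)
  have diff: "(y - x) / 2 = real k * (real m1 - real m2) * pi / (2 * real m1)"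
    using m by (simp add: x_def y_def field_simps)
  have sin_zero: "sin (a / (2 * real m1)) = 0 \<longleftrightarrow> (\<exists>i::int. a = 2 * of_int i * real m1 * pi)" for a
  proof -
    have "sin (a / (2 * real m1)) = 0 \<longleftrightarrow> (\<exists>i::int. a / (2 * real m1) = of_int i * pi)"
      by (rule sin_zero_iff_int2)
    also have "\<dots> \<longleftrightarrow> (\<exists>i::int. a = 2 * of_int i * real m1 * pi)"
      using m by (simp add: field_simps)
    finally show ?thesis .
  qed
  have global: "(\<exists>i::int. real k * (real m1 - real m2) * pi = 2 * of_int i * real m1 * pi)
      \<longleftrightarrow> 2 * int m1 dvd int k * (int m1 - int m2)"
  proof -
    have "real k * (real m1 - real m2) * pi = 2 * of_int i * real m1 * pi \<longleftrightarrow>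
        of_int (int k * (int m1 - int m2)) = (of_int (2 * int m1 * i) :: real)" for i
      by (simp add: mult_ac)
    then show ?thesis
      unfolding of_int_eq_iff dvd_def by simp
  qed
  have "cos x = cos y \<longleftrightarrow> sin ((x + y) / 2) = 0 \<or> sin ((y - x) / 2) = 0"
    using cos_diff_cos[of x y] by auto
  then show ?thesis
    unfolding shift_indices_def global_shifts_def mem_Collect_eq x_def[symmetric] y
    unfolding sum diff sin_zero global by blast
qed

lemma tnode_inj:
  assumes "m1 \<ge> 1" "m2 \<ge> 1"
  shows "tnode m1 m2 l = tnode m1 m2 l' \<longleftrightarrow> l = l'"
proof -
  have "2 * real m1 * real m2 \<noteq> 0"
    using assms by simp
  then show ?thesis
    by (simp add: tnode_def)
qed

lemma tnode_range:
  assumes "m1 \<ge> 1" "m2 \<ge> 1" "l < 4 * m1 * m2"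
  shows "tnode m1 m2 l \<in> {0..<2 * pi}"
proof -
  have D: "0 < 2 * real m1 * real m2"
    using assms(1,2) by simp
  have "real l < 4 * real m1 * real m2"
    using assms(3) by (metis of_nat_less_iff of_nat_mult of_nat_numeral)
  then have "real l * pi < 2 * pi * (2 * real m1 * real m2)"
    by (simp add: algebra_simps)
  then show ?thesis
    using D by (simp add: tnode_def pos_divide_less_eq)
qed

lemma tnode_of_int:
  assumes "m1 \<ge> 1" "m2 \<ge> 1" "t \<in> {0..<2 * pi}" "t = of_int n * pi / (2 * real m1 * real m2)"
  shows "\<exists>l<4 * m1 * m2. t = tnode m1 m2 l"
proof -
  have mm: "2 * real m1 * real m2 > 0" "real m1 \<noteq> 0" "real m2 \<noteq> 0"
    using assms(1,2) by simp_all
  have n: "of_int n * pi = t * (2 * real m1 * real m2)"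
    using assms(4) mm by (simp add: field_simps)
  have "0 \<le> of_int n * pi"
    unfolding n using assms(3) mm(1) by simp
  then have "0 \<le> n"
    using pi_gt_zero by (auto simp: zero_le_mult_iff)
  have "t * (2 * real m1 * real m2) < (2 * pi) * (2 * real m1 * real m2)"
    using assms(3) mm by (intro mult_strict_right_mono) auto
  then have "of_int n * pi < real_of_int (4 * int m1 * int m2) * pi"
    unfolding n by (simp add: algebra_simps)
  then have "real_of_int n < real_of_int (4 * int m1 * int m2)"
    using pi_gt_zero by (simp add: mult_less_cancel_right_pos)
  then have "n < 4 * int m1 * int m2"
    by (rule of_int_less_iff[THEN iffD1])
  then have "nat n < 4 * m1 * m2"
    using \<open>0 \<le> n\<close> by (simp add: nat_less_iff)
  moreover have "t = tnode m1 m2 (nat n)"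
    using \<open>0 \<le> n\<close> by (simp add: tnode_def assms(4))
  ultimately show ?thesis
    by blast
qed

lemma shift_indices_tnode:
  assumes "m1 \<ge> 1" "m2 \<ge> 1"
  shows "shift_indices m1 m2 (tnode m1 m2 l) = global_shifts m1 m2 \<union> node_shifts m1 m2 l"
proof -
  have t: "2 * real m1 * real m2 * tnode m1 m2 l = real l * pi"
    using assms by (simp add: tnode_def)
  have "2 * real m1 * real m2 * tnode m1 m2 l + real k * (real m1 + real m2) * pi =
      2 * of_int i * real m1 * pi \<longleftrightarrow> int l + int k * (int m1 + int m2) = 2 * int m1 * i" for k i
  proof -
    have "2 * real m1 * real m2 * tnode m1 m2 l + real k * (real m1 + real m2) * pi =
        2 * of_int i * real m1 * pi \<longleftrightarrow>
        of_int (int l + int k * (int m1 + int m2)) * pi = of_int (2 * int m1 * i) * pi"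
      unfolding t by (simp add: algebra_simps)
    also have "\<dots> \<longleftrightarrow> int l + int k * (int m1 + int m2) = 2 * int m1 * i"
      by (simp only: mult_cancel_right pi_neq_zero of_int_eq_iff simp_thms)
    finally show ?thesis .
  qed
  then show ?thesis
    using assms(1) by (auto simp: mem_shift_indices_iff node_shifts_def dvd_def global_shifts_def)
qed

lemma shift_indices_non_tnode:
  assumes "m1 \<ge> 1" "m2 \<ge> 1" "t \<in> {0..<2 * pi}" "\<not> (\<exists>l<4 * m1 * m2. t = tnode m1 m2 l)"
  shows "shift_indices m1 m2 t = global_shifts m1 m2"
proof -
  have "2 * real m1 * real m2 * t + real k * (real m1 + real m2) * pi \<noteq> 2 * of_int i * real m1 * pi"
    for k i
  proof
    assume eq: "2 * real m1 * real m2 * t + real k * (real m1 + real m2) * pi = 2 * of_int i * real m1 * pi"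
    have "t = of_int (2 * i * int m1 - int k * (int m1 + int m2)) * pi / (2 * real m1 * real m2)"
      using assms(1,2) eq by (simp add: field_simps)
    then show False
      using tnode_of_int[OF assms(1-3)] assms(4) by blast
  qed
  then show ?thesis
    using assms(1) by (auto simp: mem_shift_indices_iff global_shifts_def)
qed

lemma odd_multiple_iff_mod:
  fixes l m :: nat
  assumes "m > 0"
  shows "(\<exists>i::int. odd i \<and> int l = i * int m) \<longleftrightarrow> l mod (2 * m) = m"
proof
  assume "\<exists>i::int. odd i \<and> int l = i * int m"
  then obtain i :: int where i: "odd i" "int l = i * int m"
    by blast
  then obtain j where "i = 2 * j + 1"
    by (elim oddE)
  then have "int l = int m + 2 * int m * j"
    using i(2) by (simp add: algebra_simps)
  then have "int (l mod (2 * m)) = int m"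
    using assms by (simp add: of_nat_mod)
  then show "l mod (2 * m) = m"
    by simp
next
  assume "l mod (2 * m) = m"
  then have "l = (2 * (l div (2 * m)) + 1) * m"
    using div_mult_mod_eq[of l "2 * m"] by (simp add: algebra_simps)
  then have "int l = int ((2 * (l div (2 * m)) + 1) * m)"
    by (rule arg_cong)
  also have "\<dots> = (2 * int (l div (2 * m)) + 1) * int m"
    by (simp add: algebra_simps)
  finally have "int l = (2 * int (l div (2 * m)) + 1) * int m" .
  then show "\<exists>i::int. odd i \<and> int l = i * int m"
    by (intro exI[of _ "2 * int (l div (2 * m)) + 1"]) simp
qed

lemma cos_tnode_eq_0_iff:
  assumes "m1 \<ge> 1" "m2 \<ge> 1"
  shows "cos (real m2 * tnode m1 m2 l) = 0 \<longleftrightarrow> l mod (2 * m1) = m1"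
proof -
  have tnode: "real m2 * tnode m1 m2 l = real l / real m1 * (pi / 2)"
    using assms by (simp add: tnode_def field_simps)
  have "real m2 * tnode m1 m2 l = of_int i * (pi / 2) \<longleftrightarrow> int l = i * int m1" for i
  proof -
    have "real m2 * tnode m1 m2 l = of_int i * (pi / 2) \<longleftrightarrow> real l / real m1 = of_int i"
      unfolding tnode mult_cancel_right by simp
    also have "\<dots> \<longleftrightarrow> (of_int (int l) :: real) = of_int (i * int m1)"
      using assms(1) by (simp add: divide_eq_eq)
    also have "\<dots> \<longleftrightarrow> int l = i * int m1"
      by (rule of_int_eq_iff)
    finally show ?thesis .
  qed
  then have "cos (real m2 * tnode m1 m2 l) = 0 \<longleftrightarrow> (\<exists>i::int. odd i \<and> int l = i * int m1)"
    by (simp add: cos_zero_iff_int)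
  also have "\<dots> \<longleftrightarrow> l mod (2 * m1) = m1"
    using assms(1) by (intro odd_multiple_iff_mod) simp
  finally show ?thesis .
qed

lemma cos_eq_0_iff_tnode:
  assumes "m1 \<ge> 1" "m2 \<ge> 1" "t \<in> {0..<2 * pi}"
  shows "cos (real m2 * t) = 0 \<longleftrightarrow> (\<exists>l<4 * m1 * m2. t = tnode m1 m2 l \<and> l mod (2 * m1) = m1)"
proof
  assume zero: "cos (real m2 * t) = 0"
  then obtain i :: int where "real m2 * t = of_int i * (pi / 2)"
    by (auto simp: cos_zero_iff_int)
  then have "t = of_int (i * int m1) * pi / (2 * real m1 * real m2)"
    using assms(1,2) by (simp add: field_simps)
  then obtain l where l: "l < 4 * m1 * m2" "t = tnode m1 m2 l"
    using tnode_of_int[OF assms] by blast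
  moreover have "l mod (2 * m1) = m1"
    using zero l(2) cos_tnode_eq_0_iff[OF assms(1,2)] by simp
  ultimately show "\<exists>l<4 * m1 * m2. t = tnode m1 m2 l \<and> l mod (2 * m1) = m1"
    by blast
next
  assume "\<exists>l<4 * m1 * m2. t = tnode m1 m2 l \<and> l mod (2 * m1) = m1"
  then show "cos (real m2 * t) = 0"
    using cos_tnode_eq_0_iff[OF assms(1,2)] by auto
qed

lemma card_residue_class:
  fixes a n r :: nat
  assumes "r < n"
  shows "card {k. k < a * n \<and> k mod n = r} = a"
proof -
  have "{k. k < a * n \<and> k mod n = r} = (\<lambda>i. r + i * n) ` {..<a}"
  proof (intro set_eqI iffI)
    fix k assume "k \<in> {k. k < a * n \<and> k mod n = r}"
    then have k: "k < a * n" "k mod n = r"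
      by auto
    have "k = r + (k div n) * n"
      using div_mult_mod_eq[of k n] k(2) by simp
    moreover have "k div n < a"
      using k(1) by (rule less_mult_imp_div_less)
    ultimately show "k \<in> (\<lambda>i. r + i * n) ` {..<a}"
      by blast
  next
    fix k assume "k \<in> (\<lambda>i. r + i * n) ` {..<a}"
    then obtain i where i: "i < a" "k = r + i * n"
      by blast
    have "r + i * n < Suc i * n"
      using assms by simp
    also have "\<dots> \<le> a * n"
      using i(1) by (intro mult_le_mono1) simp
    finally show "k \<in> {k. k < a * n \<and> k mod n = r}"
      using assms i(2) by simp
  qed
  moreover have "inj_on (\<lambda>i. r + i * n) {..<a}"
    using assms by (intro inj_onI) simp
  ultimately show ?thesis
    by (simp add: card_image)
qed

lemma card_self_inter_set_rhodonea_origin: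
  assumes "m1 \<ge> 1" "m2 \<ge> 1" "cos (real m2 * t) = 0"
  shows "card (self_inter_set (rhodonea m1 m2 \<alpha>) t) = 2 * m2"
proof -
  let ?L = "{l. l < 2 * m2 * (2 * m1) \<and> l mod (2 * m1) = m1}"
  have origin: "rhodonea m1 m2 \<alpha> t = (0, 0)"
    using assms(3) by (simp add: rhodonea_eq_origin_iff)
  have bound: "4 * m1 * m2 = 2 * m2 * (2 * m1)"
    by simp
  have inj: "inj (tnode m1 m2)"
    by (rule injI) (simp add: tnode_inj[OF assms(1,2)])
  have "self_inter_set (rhodonea m1 m2 \<alpha>) t = {s \<in> {0..<2 * pi}. cos (real m2 * s) = 0}"
    unfolding self_inter_set_def origin rhodonea_eq_origin_iff ..
  also have "\<dots> = tnode m1 m2 ` ?L"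
  proof (intro set_eqI iffI)
    fix s assume "s \<in> {s \<in> {0..<2 * pi}. cos (real m2 * s) = 0}"
    then obtain l where "l < 4 * m1 * m2" "s = tnode m1 m2 l" "l mod (2 * m1) = m1"
      using cos_eq_0_iff_tnode[OF assms(1,2)] by blast
    then show "s \<in> tnode m1 m2 ` ?L"
      unfolding bound by blast
  next
    fix s assume "s \<in> tnode m1 m2 ` ?L"
    then obtain l where "l < 4 * m1 * m2" "l mod (2 * m1) = m1" "s = tnode m1 m2 l"
      unfolding bound by blast
    then show "s \<in> {s \<in> {0..<2 * pi}. cos (real m2 * s) = 0}"
      using tnode_range[OF assms(1,2)] cos_tnode_eq_0_iff[OF assms(1,2)] by simp
  qed
  finally have "self_inter_set (rhodonea m1 m2 \<alpha>) t = tnode m1 m2 ` ?L" .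
  moreover have "card (tnode m1 m2 ` ?L) = card ?L"
    by (rule card_image[OF inj_on_subset[OF inj subset_UNIV]])
  moreover have "card ?L = 2 * m2"
    using assms(1) by (intro card_residue_class) simp
  ultimately show ?thesis
    by simp
qed

lemma card_linear_congruence_solutions:
  fixes n a :: nat and c x :: int
  assumes "n > 0" "coprime c (int n)"
  shows "card {k. k < a * n \<and> int n dvd x + int k * c} = a"
proof -
  obtain y where y: "[c * y = 1] (mod int n)"
    using cong_solve_coprime_int[OF assms(2)] by blast
  define r where "r = nat ((- x * y) mod int n)"
  have r: "r < n" "[int r = - x * y] (mod int n)"
    using assms(1) by (simp_all add: r_def nat_less_iff cong_def)
  have "[int r * c = - x * (c * y)] (mod int n)"
    using cong_scalar_right[OF r(2), of c] by (simp add: mult_ac)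
  also have "[- x * (c * y) = - x * 1] (mod int n)"
    using y by (rule cong_scalar_left)
  finally have r_sol: "[int r * c = - x] (mod int n)"
    by simp
  have "int n dvd x + int k * c \<longleftrightarrow> k mod n = r" for k
  proof -
    have "int n dvd x + int k * c \<longleftrightarrow> [int k * c = - x] (mod int n)"
      by (simp add: cong_iff_dvd_diff add.commute)
    also have "\<dots> \<longleftrightarrow> [int k * c = int r * c] (mod int n)"
    proof
      assume "[int k * c = - x] (mod int n)"
      then show "[int k * c = int r * c] (mod int n)"
        using cong_sym[OF r_sol] by (rule cong_trans)
    next
      assume "[int k * c = int r * c] (mod int n)"
      then show "[int k * c = - x] (mod int n)"
        using r_sol by (rule cong_trans)
    qed
    also have "\<dots> \<longleftrightarrow> [k = r] (mod n)"
      using assms(2) by (simp add: cong_mult_rcancel cong_int_iff)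
    also have "\<dots> \<longleftrightarrow> k mod n = r"
      using r(1) by (simp add: cong_def)
    finally show ?thesis .
  qed
  then have "{k. k < a * n \<and> int n dvd x + int k * c} = {k. k < a * n \<and> k mod n = r}"
    by blast
  then show ?thesis
    using card_residue_class[OF r(1)] by simp
qed

lemma coprime_int_add_diff:
  assumes "coprime m1 m2"
  shows "coprime (int m1 + int m2) (int m1)" and "coprime (int m1 - int m2) (int m1)"
proof -
  have "gcd (int m2) (int m1) = 1"
    using assms by (simp add: coprime_iff_gcd_eq_1 gcd.commute)
  moreover have "gcd (int m1 + int m2) (int m1) = gcd (int m2) (int m1)"
    using gcd_add1[of "int m2" "int m1"] by (simp add: add.commute)
  moreover have "gcd (int m1 - int m2) (int m1) = gcd (int m2) (int m1)"
    by (rule gcd_diff2)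
  ultimately show "coprime (int m1 + int m2) (int m1)" and "coprime (int m1 - int m2) (int m1)"
    by (simp_all add: coprime_iff_gcd_eq_1)
qed

lemma finite_global_shifts: "finite (global_shifts m1 m2)"
  by (rule finite_subset[of _ "{..<2 * m1}"]) (auto simp: global_shifts_def)

lemma finite_node_shifts: "finite (node_shifts m1 m2 l)"
  by (rule finite_subset[of _ "{..<2 * m1}"]) (auto simp: node_shifts_def)

lemma global_shifts_odd:
  assumes "m1 \<ge> 1" "coprime m1 m2" "odd (m1 + m2)"
  shows "global_shifts m1 m2 = {0}"
proof -
  have "odd (int m1 - int m2)"
    using assms(3) by (metis even_add even_diff even_of_nat of_nat_add)
  moreover have "coprime (int m1 - int m2) (int m1)"
    using assms(2) by (rule coprime_int_add_diff)
  ultimately have "coprime (int m1 - int m2) (int (2 * m1))"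
    by simp
  from card_linear_congruence_solutions[of "2 * m1" "int m1 - int m2" 1 0, OF _ this]
  have "card (global_shifts m1 m2) = 1"
    using assms(1) by (simp add: global_shifts_def)
  then obtain k0 where "global_shifts m1 m2 = {k0}"
    by (rule card_1_singletonE)
  moreover have "0 \<in> global_shifts m1 m2"
    using assms(1) by (simp add: global_shifts_def)
  ultimately show ?thesis
    by simp
qed

lemma global_shifts_even:
  assumes "m1 \<ge> 1" "coprime m1 m2" "even (m1 + m2)"
  shows "global_shifts m1 m2 = {0, m1}"
proof -
  have "even (int m1 - int m2)"
    using assms(3) by (metis even_add even_diff even_of_nat of_nat_add)
  then obtain d where d: "int m1 - int m2 = 2 * d"
    by blast
  have "coprime (int m1 - int m2) (int m1)"
    using assms(2) by (rule coprime_int_add_diff)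
  then have "coprime d (int m1)"
    by (simp add: d)
  have "global_shifts m1 m2 = {k. k < 2 * m1 \<and> int m1 dvd 0 + int k * d}"
    by (auto simp: global_shifts_def d mult.left_commute[of _ 2])
  with card_linear_congruence_solutions[of m1 d 2 0, OF _ \<open>coprime d (int m1)\<close>]
  have "card (global_shifts m1 m2) = 2"
    using assms(1) by (simp add: mult.commute)
  moreover have "{0, m1} \<subseteq> global_shifts m1 m2"
    using assms(1) by (auto simp: global_shifts_def d)
  moreover have "card {0, m1} = 2"
    using assms(1) by simp
  ultimately show ?thesis
    using finite_global_shifts by (metis card_seteq order_refl)
qed

lemma card_node_shifts_odd:
  assumes "m1 \<ge> 1" "coprime m1 m2" "odd (m1 + m2)"
  shows "card (node_shifts m1 m2 l) = 1"
proof -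
  have "odd (int m1 + int m2)"
    using assms(3) by (metis even_of_nat of_nat_add)
  moreover have "coprime (int m1 + int m2) (int m1)"
    using assms(2) by (rule coprime_int_add_diff)
  ultimately have "coprime (int m1 + int m2) (int (2 * m1))"
    by simp
  from card_linear_congruence_solutions[of "2 * m1" "int m1 + int m2" 1 "int l", OF _ this]
  show ?thesis
    using assms(1) by (simp add: node_shifts_def)
qed

lemma node_shifts_even_odd:
  assumes "even (m1 + m2)" "odd l"
  shows "node_shifts m1 m2 l = {}"
proof -
  have "even (int m1 + int m2)"
    using assms(1) by (metis even_of_nat of_nat_add)
  then have "odd (int l + int k * (int m1 + int m2))" for k
    using assms(2) by simp
  then have "\<not> 2 * int m1 dvd int l + int k * (int m1 + int m2)" for k
    using dvd_mult_left by blast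
  then show ?thesis
    by (auto simp: node_shifts_def)
qed

lemma node_shifts_double:
  assumes "int m1 + int m2 = 2 * e"
  shows "node_shifts m1 m2 (2 * j) = {k. k < 2 * m1 \<and> int m1 dvd int j + int k * e}"
proof -
  have "2 * int m1 dvd int (2 * j) + int k * (int m1 + int m2) \<longleftrightarrow> int m1 dvd int j + int k * e"
    for k
  proof -
    have "int (2 * j) + int k * (int m1 + int m2) = 2 * (int j + int k * e)"
      unfolding assms by (simp add: algebra_simps)
    then have "2 * int m1 dvd int (2 * j) + int k * (int m1 + int m2) \<longleftrightarrow>
        2 * int m1 dvd 2 * (int j + int k * e)"
      by (simp only:)
    also have "\<dots> \<longleftrightarrow> int m1 dvd int j + int k * e"
      by (rule dvd_times_left_cancel_iff) simp
    finally show ?thesis .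
  qed
  then show ?thesis
    unfolding node_shifts_def by blast
qed

lemma card_node_shifts_even:
  assumes "m1 \<ge> 1" "coprime m1 m2" "even (m1 + m2)"
  shows "card (node_shifts m1 m2 (2 * j)) = 2"
proof -
  have "even (int m1 + int m2)"
    using assms(3) by (metis even_of_nat of_nat_add)
  then obtain e where e: "int m1 + int m2 = 2 * e"
    by blast
  have "coprime (int m1 + int m2) (int m1)"
    using assms(2) by (rule coprime_int_add_diff)
  then have "coprime e (int m1)"
    by (simp add: e)
  from card_linear_congruence_solutions[of m1 e 2 "int j", OF _ this]
  show ?thesis
    using assms(1) unfolding node_shifts_double[OF e] by (simp add: mult.commute)
qed

lemma mem_node_shifts_even_iff:
  assumes "m1 \<ge> 1" "even (m1 + m2)" "k = 0 \<or> k = m1"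
  shows "k \<in> node_shifts m1 m2 (2 * j) \<longleftrightarrow> m1 dvd j"
proof -
  have "even (int m1 + int m2)"
    using assms(2) by (metis even_of_nat of_nat_add)
  then obtain e where e: "int m1 + int m2 = 2 * e"
    by blast
  have "int m1 dvd int j + int k * e \<longleftrightarrow> int m1 dvd int j"
    using assms(3) by (auto simp: dvd_add_left_iff)
  then show ?thesis
    using assms(1,3) by (auto simp: node_shifts_double[OF e])
qed

lemma dvd_imp_mod_double_cases:
  fixes l m :: nat
  assumes "m dvd l"
  shows "l mod (2 * m) = 0 \<or> l mod (2 * m) = m"
proof -
  obtain c where c: "l = m * c"
    using assms by blast
  have "l mod (2 * m) = m * (c mod 2)"
    unfolding c by (metis mod_mult_mult1 mult.commute)
  then show ?thesis
    by (cases "even c") auto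
qed

lemma card_shifts_odd:
  assumes "m1 \<ge> 1" "coprime m1 m2" "odd (m1 + m2)"
  shows "card (global_shifts m1 m2 \<union> node_shifts m1 m2 l) = (if 2 * m1 dvd l then 1 else 2)"
proof -
  obtain k0 where k0: "node_shifts m1 m2 l = {k0}"
    using card_node_shifts_odd[OF assms] card_1_singletonE by blast
  have "k0 = 0 \<longleftrightarrow> 0 \<in> node_shifts m1 m2 l"
    using k0 by auto
  also have "\<dots> \<longleftrightarrow> 2 * m1 dvd l"
    using assms(1) int_dvd_int_iff[of "2 * m1" l] by (simp add: node_shifts_def)
  finally show ?thesis
    by (auto simp: global_shifts_odd[OF assms] k0)
qed

lemma card_shifts_even:
  assumes "m1 \<ge> 1" "coprime m1 m2" "even (m1 + m2)"
  shows "card (global_shifts m1 m2 \<union> node_shifts m1 m2 l) =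
    (if \<exists>j. l = 2 * j \<and> \<not> m1 dvd j then 4 else 2)"
proof (cases "even l")
  case False
  then show ?thesis
    using assms(1) by (auto simp: global_shifts_even[OF assms] node_shifts_even_odd[OF assms(3)])
next
  case True
  then obtain j where j: "l = 2 * j"
    by blast
  have zero_m1: "k \<in> node_shifts m1 m2 l \<longleftrightarrow> m1 dvd j" if "k = 0 \<or> k = m1" for k
    unfolding j using assms(1,3) that by (rule mem_node_shifts_even_iff)
  have card_N: "card (node_shifts m1 m2 l) = 2"
    unfolding j by (rule card_node_shifts_even[OF assms])
  show ?thesis
  proof (cases "m1 dvd j")
    case True
    then have "{0, m1} \<subseteq> node_shifts m1 m2 l"
      using zero_m1 by auto
    moreover have "card {0, m1} = 2"
      using assms(1) by simp
    ultimately have "node_shifts m1 m2 l = {0, m1}"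
      using card_N finite_node_shifts by (metis card_seteq order_refl)
    then show ?thesis
      using True assms(1) by (simp add: global_shifts_even[OF assms] j)
  next
    case False
    then have "{0, m1} \<inter> node_shifts m1 m2 l = {}"
      using zero_m1 by auto
    then have "card ({0, m1} \<union> node_shifts m1 m2 l) = 2 + 2"
      using card_N assms(1) finite_node_shifts by (subst card_Un_disjoint) auto
    then show ?thesis
      using False by (auto simp: global_shifts_even[OF assms] j)
  qed
qed

lemma card_self_inter_set_rhodonea_tnode:
  assumes "m1 \<ge> 1" "m2 \<ge> 1" "l < 4 * m1 * m2" "l mod (2 * m1) \<noteq> m1"
  shows "card (self_inter_set (rhodonea m1 m2 \<alpha>) (tnode m1 m2 l)) =
    card (global_shifts m1 m2 \<union> node_shifts m1 m2 l)"
  using card_self_inter_set_rhodonea[OF assms(1) tnode_range[OF assms(1-3)]] assms(4)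
  by (simp add: cos_tnode_eq_0_iff[OF assms(1,2)] shift_indices_tnode[OF assms(1,2)])

lemma card_self_inter_set_rhodonea_non_tnode:
  assumes "m1 \<ge> 1" "m2 \<ge> 1" "t \<in> {0..<2 * pi}" "\<not> (\<exists>l<4 * m1 * m2. t = tnode m1 m2 l)"
  shows "card (self_inter_set (rhodonea m1 m2 \<alpha>) t) = card (global_shifts m1 m2)"
proof -
  have "cos (real m2 * t) \<noteq> 0"
    using cos_eq_0_iff_tnode[OF assms(1-3)] assms(4) by blast
  then show ?thesis
    using card_self_inter_set_rhodonea[OF assms(1,3)] shift_indices_non_tnode[OF assms] by simp
qed

lemma card_self_inter_set_rhodonea_odd:
  assumes "m1 \<ge> 1" "m2 \<ge> 1" "coprime m1 m2" "odd (m1 + m2)"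
    "t \<in> {0..<2 * pi}" "cos (real m2 * t) \<noteq> 0"
  shows "card (self_inter_set (rhodonea m1 m2 \<alpha>) t) =
    (if \<exists>l<4 * m1 * m2. t = tnode m1 m2 l \<and> l mod m1 \<noteq> 0 then 2 else 1)"
proof (cases "\<exists>l<4 * m1 * m2. t = tnode m1 m2 l")
  case True
  then obtain l where l: "l < 4 * m1 * m2" "t = tnode m1 m2 l"
    by blast
  have l_mod: "l mod (2 * m1) \<noteq> m1"
    using assms(6) cos_tnode_eq_0_iff[OF assms(1,2)] l(2) by simp
  have "2 * m1 dvd l \<longleftrightarrow> m1 dvd l"
    using l_mod dvd_imp_mod_double_cases[of m1 l] by (auto simp: dvd_eq_mod_eq_0 dest: dvd_mult_left)
  then have "card (global_shifts m1 m2 \<union> node_shifts m1 m2 l) = (if m1 dvd l then 1 else 2)"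
    using card_shifts_odd[OF assms(1,3,4)] by simp
  moreover have "(\<exists>l'<4 * m1 * m2. t = tnode m1 m2 l' \<and> l' mod m1 \<noteq> 0) \<longleftrightarrow> \<not> m1 dvd l"
    using l tnode_inj[OF assms(1,2)] by (auto simp: dvd_eq_mod_eq_0)
  ultimately show ?thesis
    using card_self_inter_set_rhodonea_tnode[OF assms(1,2) l(1) l_mod] l(2) by simp
next
  case False
  then show ?thesis
    using card_self_inter_set_rhodonea_non_tnode[OF assms(1,2,5) False]
    by (auto simp: global_shifts_odd[OF assms(1,3,4)])
qed

lemma card_self_inter_set_rhodonea_even:
  assumes "m1 \<ge> 1" "m2 \<ge> 1" "coprime m1 m2" "even (m1 + m2)"
    "t \<in> {0..<2 * pi}" "cos (real m2 * t) \<noteq> 0"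
  shows "card (self_inter_set (rhodonea m1 m2 \<alpha>) t) =
    (if \<exists>l<2 * m1 * m2. t = tnode m1 m2 (2 * l) \<and> l mod m1 \<noteq> 0 then 4 else 2)"
proof (cases "\<exists>l<4 * m1 * m2. t = tnode m1 m2 l")
  case True
  then obtain l where l: "l < 4 * m1 * m2" "t = tnode m1 m2 l"
    by blast
  have l_mod: "l mod (2 * m1) \<noteq> m1"
    using assms(6) cos_tnode_eq_0_iff[OF assms(1,2)] l(2) by simp
  have cond: "(\<exists>j<2 * m1 * m2. t = tnode m1 m2 (2 * j) \<and> j mod m1 \<noteq> 0) \<longleftrightarrow>
      (\<exists>j. l = 2 * j \<and> \<not> m1 dvd j)"
    using l tnode_inj[OF assms(1,2)] by (auto simp: dvd_eq_mod_eq_0)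
  then show ?thesis
    using card_self_inter_set_rhodonea_tnode[OF assms(1,2) l(1) l_mod] l(2)
      card_shifts_even[OF assms(1,3,4)] by simp
next
  case False
  have "\<not> (\<exists>j<2 * m1 * m2. t = tnode m1 m2 (2 * j) \<and> j mod m1 \<noteq> 0)"
  proof
    assume "\<exists>j<2 * m1 * m2. t = tnode m1 m2 (2 * j) \<and> j mod m1 \<noteq> 0"
    then obtain j where "j < 2 * m1 * m2" "t = tnode m1 m2 (2 * j)"
      by blast
    moreover have "2 * j < 4 * m1 * m2"
      using \<open>j < 2 * m1 * m2\<close> by simp
    ultimately show False
      using False by blast
  qed
  then show ?thesis
    using card_self_inter_set_rhodonea_non_tnode[OF assms(1,2,5) False] assms(1)
    by (simp add: global_shifts_even[OF assms(1,3,4)])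
qed

lemma odd_if_coprime_even_sum:
  fixes a b :: nat
  assumes "coprime a b" "even (a + b)"
  shows "odd a"
proof
  assume "even a"
  with assms(2) have "even b"
    by simp
  with \<open>even a\<close> show False
    using coprime_common_divisor[OF assms(1), of 2] by simp
qed

lemma minimal_period_rhodonea_odd:
  assumes "m1 \<ge> 1" "m2 \<ge> 1" "coprime m1 m2" "odd (m1 + m2)"
  shows "minimal_period (rhodonea m1 m2 \<alpha>) (2 * pi)"
proof -
  have "card (self_inter_set (rhodonea m1 m2 \<alpha>) 0) = 1"
    using card_self_inter_set_rhodonea_odd[OF assms, of 0] assms(1,2) by (simp add: tnode_def)
  then show ?thesis
    using minimal_period_of_card_self_inter_set[of 1 "rhodonea m1 m2 \<alpha>"] by (simp add: rhodonea_add_2pi)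
qed

lemma minimal_period_rhodonea_even:
  assumes "m1 \<ge> 1" "m2 \<ge> 1" "coprime m1 m2" "even (m1 + m2)"
  shows "minimal_period (rhodonea m1 m2 \<alpha>) pi"
proof -
  have "card (self_inter_set (rhodonea m1 m2 \<alpha>) 0) = 2"
    using card_self_inter_set_rhodonea_even[OF assms, of 0] assms(1,2) by (simp add: tnode_def)
  then show ?thesis
    using minimal_period_of_card_self_inter_set[of 2 "rhodonea m1 m2 \<alpha>"]
    by (simp add: rhodonea_add_pi[OF assms(4)])
qed

lemma card_self_inter_set_rhodonea_origin_tnode:
  assumes "m1 \<ge> 1" "m2 \<ge> 1" "\<exists>l<4 * m1 * m2. t = tnode m1 m2 l \<and> l mod (2 * m1) = m1"
  shows "card (self_inter_set (rhodonea m1 m2 \<alpha>) t) = 2 * m2"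
proof -
  have "cos (real m2 * t) = 0"
    using assms(3) cos_tnode_eq_0_iff[OF assms(1,2)] by auto
  then show ?thesis
    by (rule card_self_inter_set_rhodonea_origin[OF assms(1,2)])
qed

lemma card_self_inter_set_rhodonea_odd_crossing:
  assumes "m1 \<ge> 1" "m2 \<ge> 1" "coprime m1 m2" "odd (m1 + m2)"
    "\<exists>l<4 * m1 * m2. t = tnode m1 m2 l \<and> l mod m1 \<noteq> 0"
  shows "card (self_inter_set (rhodonea m1 m2 \<alpha>) t) = 2"
proof -
  obtain l where l: "l < 4 * m1 * m2" "t = tnode m1 m2 l" "l mod m1 \<noteq> 0"
    using assms(5) by blast
  have "l mod (2 * m1) \<noteq> m1"
    using l(3) mod_mod_cancel[of m1 "2 * m1" l] by auto
  then have "cos (real m2 * t) \<noteq> 0"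
    using l(2) cos_tnode_eq_0_iff[OF assms(1,2)] by simp
  then show ?thesis
    using card_self_inter_set_rhodonea_odd[OF assms(1-4) tnode_range[OF assms(1,2) l(1)]] assms(5) l(2)
    by simp
qed

lemma card_self_inter_set_rhodonea_odd_simple:
  assumes "m1 \<ge> 1" "m2 \<ge> 1" "coprime m1 m2" "odd (m1 + m2)" "t \<in> {0..<2 * pi}"
    "\<not> (\<exists>l<4 * m1 * m2. t = tnode m1 m2 l \<and> l mod (2 * m1) = m1)"
    "\<not> (\<exists>l<4 * m1 * m2. t = tnode m1 m2 l \<and> l mod m1 \<noteq> 0)"
  shows "card (self_inter_set (rhodonea m1 m2 \<alpha>) t) = 1"
  using card_self_inter_set_rhodonea_odd[OF assms(1-5)] cos_eq_0_iff_tnode[OF assms(1,2,5)] assms(6,7)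
  by simp

lemma card_self_inter_set_rhodonea_even_crossing:
  assumes "m1 \<ge> 1" "m2 \<ge> 1" "coprime m1 m2" "even (m1 + m2)"
    "\<exists>l<2 * m1 * m2. t = tnode m1 m2 (2 * l) \<and> l mod m1 \<noteq> 0"
  shows "card (self_inter_set (rhodonea m1 m2 \<alpha>) t) = 4"
proof -
  obtain l where l: "l < 2 * m1 * m2" "t = tnode m1 m2 (2 * l)" "l mod m1 \<noteq> 0"
    using assms(5) by blast
  have "(2 * l) mod (2 * m1) = 2 * (l mod m1)"
    by (rule mod_mult_mult1)
  then have "(2 * l) mod (2 * m1) \<noteq> m1"
    using odd_if_coprime_even_sum[OF assms(3,4)] by (metis dvd_triv_left)
  then have "cos (real m2 * t) \<noteq> 0"
    using l(2) cos_tnode_eq_0_iff[OF assms(1,2)] by simp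
  moreover have "t \<in> {0..<2 * pi}"
    using l(1,2) tnode_range[OF assms(1,2), of "2 * l"] by simp
  ultimately show ?thesis
    using card_self_inter_set_rhodonea_even[OF assms(1-4)] assms(5) by simp
qed

lemma card_self_inter_set_rhodonea_even_simple:
  assumes "m1 \<ge> 1" "m2 \<ge> 1" "coprime m1 m2" "even (m1 + m2)" "t \<in> {0..<2 * pi}"
    "\<not> (\<exists>l<4 * m1 * m2. t = tnode m1 m2 l \<and> l mod (2 * m1) = m1)"
    "\<not> (\<exists>l<2 * m1 * m2. t = tnode m1 m2 (2 * l) \<and> l mod m1 \<noteq> 0)"
  shows "card (self_inter_set (rhodonea m1 m2 \<alpha>) t) = 2"
  using card_self_inter_set_rhodonea_even[OF assms(1-5)] cos_eq_0_iff_tnode[OF assms(1,2,5)] assms(6,7)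
  by simp

theorem proposition2p1:
  fixes m1 m2 :: nat and \<alpha> :: real
  assumes "m1 \<ge> 1" and "m2 \<ge> 1" and "coprime m1 m2"
  defines "\<rho> \<equiv> rhodonea m1 m2 \<alpha>"
  shows
   "(odd (m1 + m2) \<longrightarrow>
      minimal_period \<rho> (2*pi) \<and>
      (\<forall>t\<in>{0..<2*pi}.
        ((\<exists>l<4*m1*m2. t = tnode m1 m2 l \<and> l mod (2*m1) = m1)
            \<longrightarrow> card (self_inter_set \<rho> t) = 2*m2) \<and>
        ((\<exists>l<4*m1*m2. t = tnode m1 m2 l \<and> l mod m1 \<noteq> 0)
            \<longrightarrow> card (self_inter_set \<rho> t) = 2) \<and>
        (\<not> (\<exists>l<4*m1*m2. t = tnode m1 m2 l \<and> l mod (2*m1) = m1) \<and>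
         \<not> (\<exists>l<4*m1*m2. t = tnode m1 m2 l \<and> l mod m1 \<noteq> 0)
            \<longrightarrow> card (self_inter_set \<rho> t) = 1))) \<and>
    (even (m1 + m2) \<longrightarrow>
      minimal_period \<rho> pi \<and>
      (\<forall>t\<in>{0..<2*pi}.
        ((\<exists>l<4*m1*m2. t = tnode m1 m2 l \<and> l mod (2*m1) = m1)
            \<longrightarrow> card (self_inter_set \<rho> t) = 2*m2) \<and>
        ((\<exists>l<2*m1*m2. t = tnode m1 m2 (2*l) \<and> l mod m1 \<noteq> 0)
            \<longrightarrow> card (self_inter_set \<rho> t) = 4) \<and>
        (\<not> (\<exists>l<4*m1*m2. t = tnode m1 m2 l \<and> l mod (2*m1) = m1) \<and>
         \<not> (\<exists>l<2*m1*m2. t = tnode m1 m2 (2*l) \<and> l mod m1 \<noteq> 0)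
            \<longrightarrow> card (self_inter_set \<rho> t) = 2)))"
  unfolding \<rho>_def
  apply (intro conjI impI ballI)
  subgoal by (rule minimal_period_rhodonea_odd[OF assms(1-3)])
  subgoal by (rule card_self_inter_set_rhodonea_origin_tnode[OF assms(1,2)])
  subgoal by (rule card_self_inter_set_rhodonea_odd_crossing[OF assms(1-3)])
  subgoal using card_self_inter_set_rhodonea_odd_simple[OF assms(1-3)] by blast
  subgoal by (rule minimal_period_rhodonea_even[OF assms(1-3)])
  subgoal by (rule card_self_inter_set_rhodonea_origin_tnode[OF assms(1,2)])
  subgoal by (rule card_self_inter_set_rhodonea_even_crossing[OF assms(1-3)])
  subgoal using card_self_inter_set_rhodonea_even_simple[OF assms(1-3)] by blast
  done

end
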